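(* Let $\mathcal{A}$ be a complex Banach algebra with identity, $\lambda$ a nonzero complex number, and $M = \begin{pmatrix} A & B \\ C & D \end{pmatrix} \in M_2(\mathcal{A})$ with $A, D \in \mathcal{A}^d$. Suppose $BC, CB \in \mathcal{A}^d$, and $$AB = \lambda A^\pi B D (CB)^\pi \quad\text{and}\quad DC = \lambda D^\pi C A (BC)^\pi.$$ Put $P = \begin{pmatrix} A & 0 \\ 0 & D \end{pmatrix}$ and $Q = \begin{pmatrix} 0 & B \\ C & 0 \end{pmatrix}$, so $M=P+Q$, $P^d=\begin{pmatrix} A^d & 0 \\ 0 & D^d \end{pmatrix}$, $Q^d=\begin{pmatrix} 0 & B(CB)^d \\ C(BC)^d & 0 \end{pmatrix}$. Then $M \in M_2(\mathcal{A})^d$ and $$\begin{aligned} M^d ={}& \begin{pmatrix} (BC)^\pi A^d & B(CB)^d D^\pi \\ C(BC)^d A^\pi & (CB)^\pi D^d \end{pmatrix} + \sum_{n=0}^{\infty} (Q^d)^{n+2} P M^n P^\pi + Q^\pi \sum_{n=0}^{\infty} M^n Q (P^d)^{n+2} \\ &- \sum_{n=0}^{\infty} \sum_{k=0}^{\infty} (Q^d)^{k+1} P M^{n+k} Q (P^d)^{n+2} - \sum_{n=0}^{\infty} (Q^d)^{n+2} P M^n Q P^d.\end{aligned}$$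
   Context: $M_2(\mathcal{A})$ is the Banach algebra of $2\times 2$ matrices over $\mathcal{A}$. An element $x$ of a Banach algebra has a generalized Drazin (g-Drazin) inverse $x^d$ if $x^d$ commutes with $x$, $x^d = x^dxx^d$ and $x - x^2x^d$ is quasinilpotent (i.e. $\lim\|y^n\|^{1/n}=0$ for $y=x-x^2x^d$); $\mathcal{A}^d$ (resp. $M_2(\mathcal{A})^d$) denotes the set of g-Drazin invertible elements. The spectral idempotent is $x^\pi = 1 - xx^d$. *)

theory Defs
  imports "HOL-Analysis.Analysis"
begin

class cbanach_algebra = real_normed_algebra_1 + banach +
  fixes scaleC :: "complex \<Rightarrow> 'a \<Rightarrow> 'a"
  assumes scaleC_add_right: "scaleC a (x + y) = scaleC a x + scaleC a y"
    and scaleC_add_left: "scaleC (a + b) x = scaleC a x + scaleC b x"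
    and scaleC_scaleC: "scaleC a (scaleC b x) = scaleC (a * b) x"
    and scaleC_one: "scaleC 1 x = x"
    and scaleC_of_real: "scaleC (of_real r) x = scaleR r x"
    and norm_scaleC: "norm (scaleC a x) = cmod a * norm x"
    and scaleC_left_mult: "scaleC a x * y = scaleC a (x * y)"
    and scaleC_right_mult: "x * scaleC a y = scaleC a (x * y)"

definition quasinilpotent :: "'a::real_normed_algebra_1 \<Rightarrow> bool" where
  "quasinilpotent y \<longleftrightarrow> (\<lambda>n. root n (norm (y ^ n))) \<longlonglongrightarrow> 0"

definition is_gdrazin :: "'a::real_normed_algebra_1 \<Rightarrow> 'a \<Rightarrow> bool" where
  "is_gdrazin x y \<longleftrightarrow> x * y = y * x \<and> y = y * x * y \<and> quasinilpotent (x - x * x * y)"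

definition gd_set :: "'a::real_normed_algebra_1 set" where
  "gd_set = {x. \<exists>y. is_gdrazin x y}"

definition gd :: "'a::real_normed_algebra_1 \<Rightarrow> 'a" where
  "gd x = (THE y. is_gdrazin x y)"

definition gpi :: "'a::real_normed_algebra_1 \<Rightarrow> 'a" where
  "gpi x = 1 - x * gd x"

text \<open>M_2(A) is modelled as the type of 2x2 arrays with the matrix product (**),
  identity (mat 1) and the (equivalent) Euclidean-type norm of the vector type.\<close>

definition mat2 :: "'a::zero \<Rightarrow> 'a \<Rightarrow> 'a \<Rightarrow> 'a \<Rightarrow> 'a^2^2" where
  "mat2 a b c d = (\<chi> i j. if i = 1 then (if j = 1 then a else b) else (if j = 1 then c else d))"

primrec mpow :: "('a::semiring_1)^'n^'n \<Rightarrow> nat \<Rightarrow> 'a^'n^'n" where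
  "mpow X 0 = mat 1"
| "mpow X (Suc n) = X ** mpow X n"

definition mquasinilpotent :: "('a::real_normed_algebra_1)^2^2 \<Rightarrow> bool" where
  "mquasinilpotent Y \<longleftrightarrow> (\<lambda>n. root n (norm (mpow Y n))) \<longlonglongrightarrow> 0"

definition mis_gdrazin :: "('a::real_normed_algebra_1)^2^2 \<Rightarrow> 'a^2^2 \<Rightarrow> bool" where
  "mis_gdrazin X Y \<longleftrightarrow> X ** Y = Y ** X \<and> Y = Y ** X ** Y \<and> mquasinilpotent (X - X ** X ** Y)"

definition mgd_set :: "(('a::real_normed_algebra_1, 2) vec, 2) vec set" where
  "mgd_set = {X. \<exists>Y. mis_gdrazin X Y}"

definition mgd :: "('a::real_normed_algebra_1)^2^2 \<Rightarrow> 'a^2^2" where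
  "mgd X = (THE Y. mis_gdrazin X Y)"

definition mpi :: "('a::real_normed_algebra_1)^2^2 \<Rightarrow> 'a^2^2" where
  "mpi X = mat 1 - X ** mgd X"

end

theory Submission
  imports Defs
begin

text \<open>The corner conditions first give \<open>A\<^sup>d B = 0\<close> and then
  \<open>A B = \<lambda> B D\<close>, \<open>D C = \<lambda> C A\<close>. Hence \<open>C A\<^sup>n = \<lambda>\<^sup>-\<^sup>n D\<^sup>n C\<close>, and \<open>D\<^sup>n C\<close> only involves
  the quasinilpotent part of \<open>D\<close>, which forces \<open>C A\<^sup>d = 0\<close>; in the same way
  \<open>(BC)\<^sup>d A = 0\<close>. Together with their mirror images these give
  \<open>P\<^sup>d Q = Q P\<^sup>d = Q\<^sup>d P = P Q\<^sup>d = 0\<close>, so every series in the formula vanishes and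
  \<open>M\<^sup>d = P\<^sup>d + Q\<^sup>d\<close>, as soon as the quasinilpotent parts of \<open>P\<close> and \<open>Q\<close> have a
  quasinilpotent sum. These parts \<open>\<lambda>\<close>-commute, and expanding \<open>(u + w)\<^sup>n\<close> with Gaussian
  binomial coefficients shows that a sum of two \<open>\<lambda>\<close>-commuting quasinilpotents is
  quasinilpotent.\<close>

section \<open>Rapid decay and quasinilpotence\<close>

definition rapid_decay :: "(nat \<Rightarrow> real) \<Rightarrow> bool" where
  "rapid_decay f \<longleftrightarrow> (\<forall>e>0. \<exists>C. \<forall>n. f n \<le> C * e ^ n)"

lemma rapid_decay_root_tendsto_0:
  assumes rd: "rapid_decay f" and nonneg: "\<And>n. 0 \<le> f n"
  shows "(\<lambda>n. root n (f n)) \<longlonglongrightarrow> 0"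
  unfolding LIMSEQ_def dist_real_def
proof (intro allI impI)
  fix e :: real assume e: "e > 0"
  obtain C where C: "\<And>n. f n \<le> C * (e/2) ^ n"
    using rd e unfolding rapid_decay_def by (meson half_gt_zero)
  have C0: "C \<ge> 0" using C[of 0] nonneg[of 0] by simp
  have "(\<lambda>n. root n (C + 1)) \<longlonglongrightarrow> 1" using C0 by (intro LIMSEQ_root_const) auto
  from this[unfolded LIMSEQ_def, rule_format, of "1/2"]
  obtain N where N0: "\<And>n. n \<ge> N \<Longrightarrow> dist (root n (C + 1)) 1 < 1/2" by auto
  have N: "root n (C + 1) < 3/2" if "n \<ge> N" for n
    using N0[OF that] unfolding dist_real_def by linarith
  show "\<exists>N. \<forall>n\<ge>N. \<bar>root n (f n) - 0\<bar> < e"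
  proof (intro exI[of _ "Suc N"] allI impI)
    fix n assume n: "n \<ge> Suc N"
    have "C * (e/2) ^ n \<le> (C + 1) * (e/2) ^ n" using e by (intro mult_right_mono) auto
    hence "f n \<le> (C + 1) * (e/2) ^ n" using C[of n] by linarith
    hence "root n (f n) \<le> root n ((C + 1) * (e/2) ^ n)" using n by simp
    also have "\<dots> = root n (C + 1) * (e/2)"
      using n e by (simp add: real_root_mult real_root_power_cancel)
    also have "\<dots> < 3/2 * (e/2)"
      using N[OF Suc_leD[OF n]] e by (intro mult_strict_right_mono) auto
    also have "\<dots> < e" using e by simp
    finally show "\<bar>root n (f n) - 0\<bar> < e" using nonneg n by simp
  qed
qed

lemma rapid_decay_if_root_tendsto_0:
  assumes lim: "(\<lambda>n. root n (f n)) \<longlonglongrightarrow> 0" and nonneg: "\<And>n. 0 \<le> f n"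
  shows "rapid_decay f"
  unfolding rapid_decay_def
proof (intro allI impI)
  fix e :: real assume e: "e > 0"
  from lim e obtain N where N: "\<And>n. n \<ge> N \<Longrightarrow> root n (f n) < e"
    unfolding LIMSEQ_def dist_real_def by (metis abs_less_iff diff_zero)
  define C where "C = 1 + (\<Sum>i\<le>N. f i / e ^ i)"
  have "f n \<le> C * e ^ n" for n
  proof (cases "n \<le> N")
    case True
    have "f n / e ^ n \<le> (\<Sum>i\<le>N. f i / e ^ i)"
      using True nonneg e by (intro member_le_sum) auto
    hence "f n / e ^ n \<le> C" unfolding C_def by simp
    thus ?thesis using e by (simp add: divide_le_eq)
  next
    case False
    have "f n = root n (f n) ^ n" using False nonneg by simp
    also have "\<dots> \<le> e ^ n" using N[of n] False nonneg by (intro power_mono) auto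
    also have "\<dots> \<le> C * e ^ n"
    proof -
      have "1 \<le> C" unfolding C_def using nonneg e by (auto intro!: sum_nonneg)
      thus ?thesis using mult_right_mono[of 1 C "e ^ n"] e by simp
    qed
    finally show ?thesis .
  qed
  thus "\<exists>C. \<forall>n. f n \<le> C * e ^ n" by blast
qed

lemma rapid_decay_iff_root:
  "(\<And>n. 0 \<le> f n) \<Longrightarrow> rapid_decay f \<longleftrightarrow> (\<lambda>n. root n (f n)) \<longlonglongrightarrow> 0"
  using rapid_decay_root_tendsto_0 rapid_decay_if_root_tendsto_0 by blast

lemma rapid_decay_nonneg_const:
  assumes "rapid_decay f" "\<And>n. 0 \<le> f n" "e > 0"
  obtains C where "C \<ge> 0" "\<And>n. f n \<le> C * e ^ n"
proof -
  obtain C where C: "\<And>n. f n \<le> C * e ^ n" using assms unfolding rapid_decay_def by blast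
  moreover have "C \<ge> 0" using C[of 0] assms(2)[of 0] by simp
  ultimately show thesis using that by blast
qed

lemma rapid_decay_mono:
  assumes "rapid_decay g" "\<And>n. f n \<le> g n"
  shows "rapid_decay f"
  using assms unfolding rapid_decay_def by (meson order_trans)

lemma rapid_decay_scale:
  assumes g: "rapid_decay g" "\<And>n. 0 \<le> g n" and K: "0 \<le> K" and L: "0 \<le> L"
  shows "rapid_decay (\<lambda>n. K * L ^ n * g n)"
  unfolding rapid_decay_def
proof (intro allI impI)
  fix e :: real assume e: "e > 0"
  define e' where "e' = e / (L + 1)"
  have e': "e' > 0" "L * e' \<le> e" using L e by (auto simp: e'_def field_simps)
  obtain C where C0: "C \<ge> 0" and C: "\<And>n. g n \<le> C * e' ^ n"
    using rapid_decay_nonneg_const[OF g e'(1)] by blast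
  have "K * L ^ n * g n \<le> (K * C) * e ^ n" for n
  proof -
    have "K * L ^ n * g n \<le> K * L ^ n * (C * e' ^ n)"
      using C[of n] K L by (intro mult_left_mono) auto
    also have "\<dots> = K * C * (L * e') ^ n" by (simp add: power_mult_distrib)
    also have "\<dots> \<le> K * C * e ^ n"
      using K C0 L e' by (intro mult_left_mono power_mono) auto
    finally show ?thesis .
  qed
  thus "\<exists>C. \<forall>n. K * L ^ n * g n \<le> C * e ^ n" by blast
qed

lemma rapid_decay_add:
  assumes "rapid_decay f" "rapid_decay g"
  shows "rapid_decay (\<lambda>n. f n + g n)"
  unfolding rapid_decay_def
proof (intro allI impI)
  fix e :: real assume "e > 0"
  then obtain C D where "\<And>n. f n \<le> C * e ^ n" "\<And>n. g n \<le> D * e ^ n"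
    using assms unfolding rapid_decay_def by blast
  hence "f n + g n \<le> (C + D) * e ^ n" for n by (metis add_mono distrib_right)
  thus "\<exists>C. \<forall>n. f n + g n \<le> C * e ^ n" by blast
qed

lemma rapid_decay_shift:
  assumes "rapid_decay (\<lambda>n. f (Suc n))"
  shows "rapid_decay f"
  unfolding rapid_decay_def
proof (intro allI impI)
  fix e :: real assume e: "e > 0"
  then obtain C where C: "\<And>n. f (Suc n) \<le> C * e ^ n" using assms unfolding rapid_decay_def by blast
  have "f n \<le> max (f 0) (C / e) * e ^ n" for n
  proof (cases n)
    case 0 thus ?thesis by simp
  next
    case (Suc m)
    have "f n \<le> C / e * e ^ n" using C[of m] Suc e by simp
    also have "\<dots> \<le> max (f 0) (C / e) * e ^ n" using e by (intro mult_right_mono) auto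
    finally show ?thesis .
  qed
  thus "\<exists>C. \<forall>n. f n \<le> C * e ^ n" by blast
qed

lemma rapid_decay_even_odd:
  assumes "rapid_decay (\<lambda>n. f (2 * n))" "rapid_decay (\<lambda>n. f (Suc (2 * n)))"
  shows "rapid_decay f"
  unfolding rapid_decay_def
proof (intro allI impI)
  fix e :: real assume e: "e > 0"
  hence e2: "e ^ 2 > 0" by simp
  obtain C where C: "\<And>n. f (2 * n) \<le> C * (e ^ 2) ^ n"
    using assms(1) e2 unfolding rapid_decay_def by blast
  obtain D where D: "\<And>n. f (Suc (2 * n)) \<le> D * (e ^ 2) ^ n"
    using assms(2) e2 unfolding rapid_decay_def by blast
  have "f n \<le> max C (D / e) * e ^ n" for n
  proof (cases "even n")
    case True
    then obtain m where m: "n = 2 * m" by (rule evenE)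
    have "f n \<le> C * e ^ n" using C[of m] by (simp add: m power_mult)
    also have "\<dots> \<le> max C (D / e) * e ^ n" using e by (intro mult_right_mono) auto
    finally show ?thesis .
  next
    case False
    define m where "m = n div 2"
    have m: "n = Suc (2 * m)" unfolding m_def using False by (simp add: odd_two_times_div_two_nat)
    have "D * (e ^ 2) ^ m = D / e * e ^ n" using e by (simp add: m power_mult)
    hence "f n \<le> D / e * e ^ n" using D[of m] m by simp
    also have "\<dots> \<le> max C (D / e) * e ^ n" using e by (intro mult_right_mono) auto
    finally show ?thesis .
  qed
  thus "\<exists>C. \<forall>n. f n \<le> C * e ^ n" by blast
qed

lemma rapid_decay_binomial:
  assumes f: "rapid_decay f" "\<And>n. 0 \<le> f n" and g: "rapid_decay g" "\<And>n. 0 \<le> g n"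
  shows "rapid_decay (\<lambda>n. \<Sum>k\<le>n. real (n choose k) * (f (n - k) * g k))"
  unfolding rapid_decay_def
proof (intro allI impI)
  fix e :: real assume e: "e > 0"
  hence e2: "e / 2 > 0" by simp
  obtain C where C0: "C \<ge> 0" and C: "\<And>n. f n \<le> C * (e/2) ^ n"
    using rapid_decay_nonneg_const[OF f e2] by blast
  obtain D where D0: "D \<ge> 0" and D: "\<And>n. g n \<le> D * (e/2) ^ n"
    using rapid_decay_nonneg_const[OF g e2] by blast
  have "(\<Sum>k\<le>n. real (n choose k) * (f (n - k) * g k)) \<le> (C * D) * e ^ n" for n
  proof -
    have row_sum: "(\<Sum>k\<le>n. real (n choose k)) = 2 ^ n"
      by (simp only: of_nat_sum[symmetric] choose_row_sum) simp
    have "(\<Sum>k\<le>n. real (n choose k) * (f (n - k) * g k))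
        \<le> (\<Sum>k\<le>n. real (n choose k) * ((C * (e/2) ^ (n - k)) * (D * (e/2) ^ k)))"
      using C0 e f(2) g(2) by (intro sum_mono mult_left_mono mult_mono C D) auto
    also have "\<dots> = (\<Sum>k\<le>n. (C * D * (e/2) ^ n) * real (n choose k))"
    proof (rule sum.cong[OF refl])
      fix k assume "k \<in> {..n}"
      hence "(e/2) ^ (n - k) * (e/2) ^ k = (e/2) ^ n" by (simp add: power_add[symmetric])
      thus "real (n choose k) * ((C * (e/2) ^ (n - k)) * (D * (e/2) ^ k))
          = (C * D * (e/2) ^ n) * real (n choose k)"
        by (simp only: mult_ac)
    qed
    also have "\<dots> = C * D * (e/2) ^ n * 2 ^ n"
      by (simp only: sum_distrib_left[symmetric] row_sum)
    also have "\<dots> = (C * D) * e ^ n" by (simp add: power_mult_distrib[symmetric])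
    finally show ?thesis .
  qed
  thus "\<exists>C. \<forall>n. (\<Sum>k\<le>n. real (n choose k) * (f (n - k) * g k)) \<le> C * e ^ n" by blast
qed

lemma rapid_decay_le_zero:
  assumes "rapid_decay f" "\<forall>\<^sub>F n in sequentially. t \<le> f n"
  shows "t \<le> 0"
proof -
  obtain C where C: "\<And>n. f n \<le> C * (1/2) ^ n"
    using assms(1) unfolding rapid_decay_def
    by (metis divide_pos_pos zero_less_one zero_less_numeral)
  have "(\<lambda>n. C * (1/2::real) ^ n) \<longlonglongrightarrow> 0"
    by (intro tendsto_mult_right_zero LIMSEQ_power_zero) simp
  moreover have "\<forall>\<^sub>F n in sequentially. t \<le> C * (1/2) ^ n"
    using assms(2) by (rule eventually_mono) (erule order_trans[OF _ C])
  ultimately show "t \<le> 0" by (rule tendsto_lowerbound) simp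
qed

lemma quasinilpotent_iff_rapid_decay:
  "quasinilpotent q \<longleftrightarrow> rapid_decay (\<lambda>n. norm (q ^ n))"
  unfolding quasinilpotent_def by (simp add: rapid_decay_iff_root)

lemma quasinilpotent_mult_commute:
  fixes b c :: "'a::real_normed_algebra_1"
  assumes "quasinilpotent (b * c)"
  shows "quasinilpotent (c * b)"
proof -
  have bound: "norm ((c * b) ^ Suc n) \<le> (norm c * norm b) * 1 ^ n * norm ((b * c) ^ n)" for n
  proof -
    have "(c * b) ^ Suc n = c * ((b * c) ^ n * b)"
      by (induction n) (simp_all add: mult.assoc)
    hence "norm ((c * b) ^ Suc n) \<le> norm c * norm ((b * c) ^ n * b)"
      by (simp add: norm_mult_ineq)
    also have "\<dots> \<le> norm c * (norm ((b * c) ^ n) * norm b)"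
      by (intro mult_left_mono norm_mult_ineq) simp
    finally show ?thesis by (simp add: mult_ac)
  qed
  have "rapid_decay (\<lambda>n. (norm c * norm b) * 1 ^ n * norm ((b * c) ^ n))"
    using assms by (intro rapid_decay_scale) (auto simp: quasinilpotent_iff_rapid_decay)
  hence "rapid_decay (\<lambda>n. norm ((c * b) ^ Suc n))" using bound by (rule rapid_decay_mono)
  thus ?thesis unfolding quasinilpotent_iff_rapid_decay by (rule rapid_decay_shift)
qed

lemma eq_0_if_dominated_by_quasinilpotent:
  fixes t q :: "'a::real_normed_algebra_1"
  assumes "quasinilpotent q" "0 \<le> K" "0 \<le> L"
    and "\<forall>\<^sub>F n in sequentially. norm t \<le> K * L ^ n * norm (q ^ n)"
  shows "t = 0"
proof -
  have "rapid_decay (\<lambda>n. K * L ^ n * norm (q ^ n))"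
    using assms unfolding quasinilpotent_iff_rapid_decay by (intro rapid_decay_scale) auto
  hence "norm t \<le> 0" using assms(4) by (rule rapid_decay_le_zero)
  thus ?thesis by simp
qed

section \<open>Generalized Drazin inverses\<close>

context
  fixes x y :: "'a::real_normed_algebra_1"
  assumes gd: "is_gdrazin x y"
begin

lemma gdrazin_commute: "x * y = y * x"
  using gd unfolding is_gdrazin_def by simp

lemma gdrazin_outer_inverse: "y * (x * y) = y"
  using gd unfolding is_gdrazin_def by (metis mult.assoc)

lemma gdrazin_quasinilpotent: "quasinilpotent (x - x * x * y)"
  using gd unfolding is_gdrazin_def by simp

lemma gdrazin_mult_square: "x * (y * y) = y"
  using gdrazin_outer_inverse gdrazin_commute by (metis mult.assoc)

lemma gdrazin_square_mult: "y * (y * x) = y"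
  using gdrazin_outer_inverse gdrazin_commute by (metis mult.assoc)

lemma gdrazin_spectral_idempotent: "(1 - x * y) * (1 - x * y) = 1 - x * y"
  using gdrazin_outer_inverse by (simp add: algebra_simps)

lemma gdrazin_spectral_commute: "(1 - x * y) * x = x * (1 - x * y)"
  using gdrazin_commute by (simp add: algebra_simps) (metis mult.assoc)

lemma gdrazin_spectral_annihilates: "(1 - x * y) * y = 0" "y * (1 - x * y) = 0"
  using gdrazin_mult_square gdrazin_outer_inverse gdrazin_commute by (simp_all add: algebra_simps)

lemma gdrazin_power_left: "x ^ n * y ^ Suc n = y"
proof (induction n)
  case (Suc n)
  have "x ^ Suc n * y ^ Suc (Suc n) = x ^ n * (x * (y * y)) * y ^ n"
    by (simp only: power_Suc2[of x] power_Suc[of y] mult.assoc)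
  also have "\<dots> = y" using Suc by (simp add: gdrazin_mult_square mult.assoc)
  finally show ?case .
qed simp

lemma gdrazin_power_right: "y ^ Suc n * x ^ n = y"
proof (induction n)
  case (Suc n)
  have "y ^ Suc (Suc n) * x ^ Suc n = y ^ n * (y * (y * x)) * x ^ n"
    by (simp only: power_Suc2[of y] power_Suc[of x] mult.assoc)
  also have "\<dots> = y" using Suc by (simp add: gdrazin_square_mult mult.assoc power_commutes)
  finally show ?case .
qed simp

lemma gdrazin_projection_power: "x * y = y ^ Suc n * x ^ Suc n" "x * y = x ^ Suc n * y ^ Suc n"
proof -
  have "x * y = y * x" by (rule gdrazin_commute)
  also have "\<dots> = (y ^ Suc n * x ^ n) * x" by (simp only: gdrazin_power_right)
  also have "\<dots> = y ^ Suc n * x ^ Suc n" by (simp only: mult.assoc power_Suc2)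
  finally show "x * y = y ^ Suc n * x ^ Suc n" .
  have "x * y = x * (x ^ n * y ^ Suc n)" by (simp only: gdrazin_power_left)
  also have "\<dots> = x ^ Suc n * y ^ Suc n" by (simp only: mult.assoc power_Suc)
  finally show "x * y = x ^ Suc n * y ^ Suc n" .
qed

lemma gdrazin_quasinilpotent_part_power:
  "(x * (1 - x * y)) ^ Suc n = x ^ Suc n * (1 - x * y)"
proof (induction n)
  case (Suc n)
  have "(x * (1 - x * y)) ^ Suc (Suc n) = x ^ Suc n * ((1 - x * y) * x) * (1 - x * y)"
    by (simp only: power_Suc2[of "x * (1 - x * y)" "Suc n"] Suc mult.assoc)
  also have "\<dots> = x ^ Suc n * x * ((1 - x * y) * (1 - x * y))"
    by (simp only: gdrazin_spectral_commute mult.assoc)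
  also have "\<dots> = x ^ Suc (Suc n) * (1 - x * y)"
    by (simp only: gdrazin_spectral_idempotent power_Suc2[symmetric])
  finally show ?case .
qed simp

end

lemma gdrazin_spectral_orthogonal:
  fixes x y z :: "'a::real_normed_algebra_1"
  assumes y: "is_gdrazin x y" and z: "is_gdrazin x z"
  shows "x * y * (1 - x * z) = 0" "(1 - x * z) * (x * y) = 0"
proof -
  define q where "q = x * (1 - x * z)"
  have q: "quasinilpotent q"
    using gdrazin_quasinilpotent[OF z] unfolding q_def by (simp add: algebra_simps)
  have q_power1: "q ^ Suc n = x ^ Suc n * (1 - x * z)" for n
    unfolding q_def by (rule gdrazin_quasinilpotent_part_power[OF z])
  have q_power2: "q ^ Suc n = (1 - x * z) * x ^ Suc n" for n
    by (simp only: q_power1 power_commuting_commutes[OF gdrazin_spectral_commute[OF z, symmetric]])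
  have bound: "\<forall>\<^sub>F n in sequentially. norm t \<le> 1 * norm y ^ n * norm (q ^ n)"
    if "\<And>n. norm t \<le> norm (y ^ Suc n) * norm (q ^ Suc n)" for t :: 'a
  proof (rule eventually_sequentiallyI[of 1])
    fix n :: nat assume "1 \<le> n"
    define m where "m = n - 1"
    have n: "n = Suc m" using \<open>1 \<le> n\<close> by (simp add: m_def)
    have "norm t \<le> norm (y ^ n) * norm (q ^ n)" using that[of m] unfolding n .
    also have "\<dots> \<le> norm y ^ n * norm (q ^ n)"
      by (intro mult_right_mono norm_power_ineq) simp
    finally show "norm t \<le> 1 * norm y ^ n * norm (q ^ n)" by simp
  qed
  have "x * y * (1 - x * z) = y ^ Suc n * q ^ Suc n" for n
    by (simp only: gdrazin_projection_power(1)[OF y, of n] q_power1 mult.assoc)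
  hence "norm (x * y * (1 - x * z)) \<le> norm (y ^ Suc n) * norm (q ^ Suc n)" for n
    by (metis norm_mult_ineq)
  thus "x * y * (1 - x * z) = 0"
    by (rule eq_0_if_dominated_by_quasinilpotent[OF q zero_le_one norm_ge_zero bound])
  have "(1 - x * z) * (x * y) = q ^ Suc n * y ^ Suc n" for n
    by (simp only: gdrazin_projection_power(2)[OF y, of n] q_power2 mult.assoc)
  hence "norm ((1 - x * z) * (x * y)) \<le> norm (y ^ Suc n) * norm (q ^ Suc n)" for n
    by (metis norm_mult_ineq mult.commute)
  thus "(1 - x * z) * (x * y) = 0"
    by (rule eq_0_if_dominated_by_quasinilpotent[OF q zero_le_one norm_ge_zero bound])
qed

lemma is_gdrazin_unique:
  fixes x y z :: "'a::real_normed_algebra_1"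
  assumes y: "is_gdrazin x y" and z: "is_gdrazin x z"
  shows "y = z"
proof -
  have "x * y = x * z * (x * y)"
    using gdrazin_spectral_orthogonal(2)[OF y z]
    by (simp only: left_diff_distrib mult_1_left eq_iff_diff_eq_0[of "x * y"])
  moreover have "x * z = x * z * (x * y)"
    using gdrazin_spectral_orthogonal(1)[OF z y]
    by (simp only: right_diff_distrib mult_1_right eq_iff_diff_eq_0[of "x * z"])
  ultimately have xy_xz: "x * y = x * z" by (metis trans sym)
  have "y = y * (x * z)" using gdrazin_outer_inverse[OF y] xy_xz by simp
  also have "\<dots> = y * x * z" by (simp only: mult.assoc)
  also have "\<dots> = x * z * z" by (simp only: gdrazin_commute[OF y, symmetric] xy_xz)
  also have "\<dots> = z" using gdrazin_mult_square[OF z] by (simp add: mult.assoc)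
  finally show ?thesis .
qed

lemma gd_eqI:
  assumes "is_gdrazin x y"
  shows "gd x = y"
  unfolding gd_def using assms by (rule the_equality) (rule is_gdrazin_unique[OF _ assms])

lemma is_gdrazin_gd: "x \<in> gd_set \<Longrightarrow> is_gdrazin x (gd x)"
  unfolding gd_set_def using gd_eqI by blast

lemma is_gdrazin_mult_commute:
  fixes b c y :: "'a::real_normed_algebra_1"
  assumes gd: "is_gdrazin (b * c) y"
  shows "is_gdrazin (c * b) (c * y * y * b)"
proof -
  have right: "b * (c * (y * (y * z))) = y * z" for z
    using gdrazin_mult_square[OF gd] by (metis mult.assoc)
  have left: "y * (y * (b * (c * z))) = y * z" for z
    using gdrazin_square_mult[OF gd] by (metis mult.assoc)
  have inner: "y * (b * (c * (y * z))) = y * z" for z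
    using gdrazin_outer_inverse[OF gd] by (metis mult.assoc)
  have commute: "c * b * (c * y * y * b) = c * y * y * b * (c * b)"
    using right left by (simp add: mult.assoc)
  have inner': "c * y * y * b * (c * b) * (c * y * y * b) = c * y * y * b"
    using left inner by (simp add: mult.assoc)
  have "c * b - c * b * (c * b) * (c * y * y * b) = c * ((1 - b * c * y) * b)"
    using right by (simp add: algebra_simps)
  moreover have "quasinilpotent (c * ((1 - b * c * y) * b))"
  proof (rule quasinilpotent_mult_commute)
    have "(1 - b * c * y) * b * c = b * c - b * c * (b * c) * y"
      using gdrazin_commute[OF gd] by (simp add: algebra_simps) (metis mult.assoc)
    thus "quasinilpotent ((1 - b * c * y) * b * c)"
      using gdrazin_quasinilpotent[OF gd] by simp
  qed
  ultimately show ?thesis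
    unfolding is_gdrazin_def using commute inner' by simp
qed

lemma is_gdrazin_add:
  fixes x x' y y' :: "'a::real_normed_algebra_1"
  assumes x: "is_gdrazin x x'" and y: "is_gdrazin y y'"
    and orth: "x' * y = 0" "y * x' = 0" "y' * x = 0" "x * y' = 0"
    and qn: "quasinilpotent (x - x * x * x' + (y - y * y * y'))"
  shows "is_gdrazin (x + y) (x' + y')"
proof -
  have xyy': "x * (y * y') = 0"
    using orth(4) gdrazin_commute[OF y] by (metis mult.assoc mult_zero_left)
  have yxx': "y * (x * x') = 0"
    using orth(2) gdrazin_commute[OF x] by (metis mult.assoc mult_zero_left)
  have x'yy': "x' * (y * y') = 0" using orth(1) by (simp add: mult.assoc[symmetric])
  have y'xx': "y' * (x * x') = 0" using orth(3) by (simp add: mult.assoc[symmetric])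
  have commute: "(x + y) * (x' + y') = (x' + y') * (x + y)"
    using orth gdrazin_commute[OF x] gdrazin_commute[OF y] by (simp add: algebra_simps)
  have inner: "(x' + y') * (x + y) * (x' + y') = x' + y'"
    using orth x'yy' y'xx' gdrazin_outer_inverse[OF x] gdrazin_outer_inverse[OF y]
    by (simp add: algebra_simps)
  have part: "(x + y) - (x + y) * (x + y) * (x' + y') = x - x * x * x' + (y - y * y * y')"
    using orth xyy' yxx' by (simp add: algebra_simps)
  show ?thesis
    unfolding is_gdrazin_def by (intro conjI commute inner[symmetric]) (simp only: part qn)
qed


lemma gdrazin_power_mult_spectral:
  fixes x y c :: "'a::real_normed_algebra_1"
  assumes gd: "is_gdrazin x y" and c: "(1 - x * y) * c = c"
  shows "x ^ n * c = (x - x * x * y) ^ n * c"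
proof (cases n)
  case (Suc m)
  have "x ^ n * c = x ^ Suc m * (1 - x * y) * c" using c by (simp add: Suc mult.assoc)
  also have "\<dots> = (x * (1 - x * y)) ^ Suc m * c"
    by (simp only: gdrazin_quasinilpotent_part_power[OF gd])
  finally show ?thesis by (simp add: Suc algebra_simps)
qed simp

lemma mult_power_gdrazin_spectral:
  fixes x y c :: "'a::real_normed_algebra_1"
  assumes gd: "is_gdrazin x y" and c: "c * (1 - x * y) = c"
  shows "c * x ^ n = c * (x - x * x * y) ^ n"
proof (cases n)
  case (Suc m)
  have "c * x ^ n = c * ((1 - x * y) * x ^ Suc m)"
    using c power_commuting_commutes[OF gdrazin_spectral_commute[OF gd, symmetric], of n]
    by (metis Suc mult.assoc)
  also have "(1 - x * y) * x ^ Suc m = (x * (1 - x * y)) ^ Suc m"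
    by (simp only: gdrazin_quasinilpotent_part_power[OF gd]
        power_commuting_commutes[OF gdrazin_spectral_commute[OF gd, symmetric]])
  finally show ?thesis by (simp add: Suc algebra_simps)
qed simp

lemma mult_gdrazin_inverse_eq_0:
  fixes x y c q :: "'a::real_normed_algebra_1"
  assumes gd: "is_gdrazin x y" and q: "quasinilpotent q" and "0 \<le> K" "0 \<le> L"
    and bound: "\<And>n. norm (c * x ^ n) \<le> K * L ^ n * norm (q ^ n)"
  shows "c * y = 0"
proof (rule eq_0_if_dominated_by_quasinilpotent[OF q])
  show "\<forall>\<^sub>F n in sequentially. norm (c * y) \<le> (K * norm y) * (L * norm y) ^ n * norm (q ^ n)"
  proof (rule always_eventually, rule allI)
    fix n
    have "norm (c * y) = norm (c * x ^ n * y ^ Suc n)"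
      by (simp only: mult.assoc gdrazin_power_left[OF gd])
    also have "\<dots> \<le> norm (c * x ^ n) * norm y ^ Suc n"
      by (metis norm_mult_ineq norm_power_ineq mult_left_mono norm_ge_zero order_trans)
    also have "\<dots> \<le> K * L ^ n * norm (q ^ n) * norm y ^ Suc n"
      by (intro mult_right_mono bound) simp
    finally show "norm (c * y) \<le> (K * norm y) * (L * norm y) ^ n * norm (q ^ n)"
      by (simp add: power_mult_distrib mult_ac)
  qed
qed (use assms in simp_all)

lemma gdrazin_inverse_mult_eq_0:
  fixes x y c q :: "'a::real_normed_algebra_1"
  assumes gd: "is_gdrazin x y" and q: "quasinilpotent q" and "0 \<le> K" "0 \<le> L"
    and bound: "\<And>n. norm (x ^ n * c) \<le> K * L ^ n * norm (q ^ n)"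
  shows "y * c = 0"
proof (rule eq_0_if_dominated_by_quasinilpotent[OF q])
  show "\<forall>\<^sub>F n in sequentially. norm (y * c) \<le> (K * norm y) * (L * norm y) ^ n * norm (q ^ n)"
  proof (rule always_eventually, rule allI)
    fix n
    have "norm (y * c) = norm (y ^ Suc n * (x ^ n * c))"
      by (simp only: mult.assoc[symmetric] gdrazin_power_right[OF gd])
    also have "\<dots> \<le> norm y ^ Suc n * norm (x ^ n * c)"
      by (metis norm_mult_ineq norm_power_ineq mult_right_mono norm_ge_zero order_trans)
    also have "\<dots> \<le> norm y ^ Suc n * (K * L ^ n * norm (q ^ n))"
      by (intro mult_left_mono bound) simp
    finally show "norm (y * c) \<le> (K * norm y) * (L * norm y) ^ n * norm (q ^ n)"
      by (simp add: power_mult_distrib mult_ac)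
  qed
qed (use assms in simp_all)


section \<open>Sums of skew-commuting quasinilpotents\<close>

primrec skew_binomial :: "'a::ring_1 \<Rightarrow> nat \<Rightarrow> nat \<Rightarrow> 'a" where
  "skew_binomial s 0 k = (if k = 0 then 1 else 0)"
| "skew_binomial s (Suc n) k =
    skew_binomial s n k * s ^ k + (if k = 0 then 0 else skew_binomial s n (k - 1))"

lemma skew_binomial_eq_0: "n < k \<Longrightarrow> skew_binomial s n k = 0"
  by (induction n arbitrary: k) simp_all

lemma norm_skew_binomial_le:
  fixes s :: "'a::real_normed_algebra_1"
  assumes "norm s \<le> 1"
  shows "norm (skew_binomial s n k) \<le> real (n choose k)"
proof (induction n arbitrary: k)
  case (Suc n)
  have first: "norm (skew_binomial s n k * s ^ k) \<le> real (n choose k)"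
  proof -
    have "norm (skew_binomial s n k * s ^ k) \<le> norm (skew_binomial s n k) * norm (s ^ k)"
      by (rule norm_mult_ineq)
    also have "\<dots> \<le> norm (skew_binomial s n k) * norm s ^ k"
      by (intro mult_left_mono norm_power_ineq) simp
    also have "\<dots> \<le> real (n choose k) * 1"
      using Suc assms by (intro mult_mono power_le_one) auto
    finally show ?thesis by simp
  qed
  show ?case
  proof (cases k)
    case (Suc j)
    have "norm (skew_binomial s (Suc n) k)
        \<le> norm (skew_binomial s n k * s ^ k) + norm (skew_binomial s n j)"
      using Suc by (simp add: norm_triangle_ineq)
    also have "\<dots> \<le> real (n choose k) + real (n choose j)" using first Suc.IH[of j] by simp
    finally show ?thesis using Suc by simp
  qed (use first in simp)
qed simp

context
  fixes u w s :: "'a::ring_1"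
  assumes skew: "w * u = s * (u * w)" and s_u: "s * u = u * s" and s_w: "s * w = w * s"
begin

lemma skew_power_commute: "w ^ k * u = s ^ k * (u * w ^ k)"
proof (induction k)
  case (Suc k)
  have "w ^ Suc k * u = w * s ^ k * (u * w ^ k)" using Suc by (simp add: mult.assoc)
  also have "w * s ^ k = s ^ k * w" using power_commuting_commutes[OF s_w] by simp
  also have "s ^ k * w * (u * w ^ k) = s ^ k * (w * u) * w ^ k" by (simp add: mult.assoc)
  also have "\<dots> = s ^ Suc k * (u * w ^ Suc k)"
    by (simp add: skew mult.assoc[symmetric] power_commutes)
  finally show ?case .
qed simp

lemma skew_binomial_expansion:
  "(u + w) ^ n = (\<Sum>k\<le>n. skew_binomial s n k * (u ^ (n - k) * w ^ k))"
proof (induction n)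
  case (Suc n)
  define T where "T k = u ^ (Suc n - k) * w ^ k" for k
  have "(u + w) ^ n * u = (\<Sum>k\<le>n. (skew_binomial s n k * s ^ k) * T k)"
    unfolding Suc sum_distrib_right
  proof (rule sum.cong[OF refl])
    fix k assume k: "k \<in> {..n}"
    have "s ^ k * u = u * s ^ k" by (rule power_commuting_commutes[OF s_u])
    hence "u ^ (n - k) * s ^ k = s ^ k * u ^ (n - k)" by (rule power_commuting_commutes[OF sym])
    hence "u ^ (n - k) * (s ^ k * (u * w ^ k)) = s ^ k * (u ^ (n - k) * u * w ^ k)"
      by (metis mult.assoc)
    moreover have "u ^ (n - k) * u = u ^ (Suc n - k)"
      using k by (simp add: Suc_diff_le power_Suc2[symmetric])
    ultimately show "skew_binomial s n k * (u ^ (n - k) * w ^ k) * u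
        = skew_binomial s n k * s ^ k * T k"
      unfolding T_def by (simp add: mult.assoc skew_power_commute)
  qed
  also have "\<dots> = (\<Sum>k\<le>Suc n. skew_binomial s n k * s ^ k * T k)"
    by (simp add: skew_binomial_eq_0)
  finally have times_u: "(u + w) ^ n * u = (\<Sum>k\<le>Suc n. skew_binomial s n k * s ^ k * T k)" .
  have "(u + w) ^ n * w = (\<Sum>k\<le>n. skew_binomial s n k * T (Suc k))"
    unfolding Suc sum_distrib_right T_def by (simp add: mult.assoc power_commutes)
  also have "\<dots> = (\<Sum>k\<le>Suc n. (if k = 0 then 0 else skew_binomial s n (k - 1)) * T k)"
    by (simp add: sum.atMost_Suc_shift del: sum.atMost_Suc)
  finally have times_w:
    "(u + w) ^ n * w = (\<Sum>k\<le>Suc n. (if k = 0 then 0 else skew_binomial s n (k - 1)) * T k)" .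
  have "(u + w) ^ Suc n = (u + w) ^ n * u + (u + w) ^ n * w"
    by (simp only: power_Suc2 distrib_left)
  also have "\<dots> = (\<Sum>k\<le>Suc n. skew_binomial s n k * s ^ k * T k)
      + (\<Sum>k\<le>Suc n. (if k = 0 then 0 else skew_binomial s n (k - 1)) * T k)"
    by (simp only: times_u times_w)
  also have "\<dots> = (\<Sum>k\<le>Suc n. skew_binomial s (Suc n) k * T k)"
    by (simp add: sum.distrib[symmetric] distrib_right)
  finally show ?case unfolding T_def .
qed simp

end

lemma quasinilpotent_add_skew_commute_le_1:
  fixes u w s :: "'a::real_normed_algebra_1"
  assumes skew: "w * u = s * (u * w)" and s_u: "s * u = u * s" and s_w: "s * w = w * s"
    and s: "norm s \<le> 1" and u: "quasinilpotent u" and w: "quasinilpotent w"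
  shows "quasinilpotent (u + w)"
proof -
  have "norm ((u + w) ^ n) \<le> (\<Sum>k\<le>n. real (n choose k) * (norm (u ^ (n - k)) * norm (w ^ k)))" for n
  proof -
    have "norm ((u + w) ^ n) \<le> (\<Sum>k\<le>n. norm (skew_binomial s n k * (u ^ (n - k) * w ^ k)))"
      unfolding skew_binomial_expansion[OF skew s_u s_w] by (rule norm_sum)
    also have "\<dots> \<le> (\<Sum>k\<le>n. real (n choose k) * (norm (u ^ (n - k)) * norm (w ^ k)))"
    proof (rule sum_mono)
      fix k
      have "norm (skew_binomial s n k * (u ^ (n - k) * w ^ k))
          \<le> norm (skew_binomial s n k) * norm (u ^ (n - k) * w ^ k)"
        by (rule norm_mult_ineq)
      also have "\<dots> \<le> real (n choose k) * (norm (u ^ (n - k)) * norm (w ^ k))"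
        by (rule mult_mono[OF norm_skew_binomial_le[OF s] norm_mult_ineq]) auto
      finally show "norm (skew_binomial s n k * (u ^ (n - k) * w ^ k))
          \<le> real (n choose k) * (norm (u ^ (n - k)) * norm (w ^ k))" .
    qed
    finally show ?thesis .
  qed
  moreover have "rapid_decay (\<lambda>n. \<Sum>k\<le>n. real (n choose k) * (norm (u ^ (n - k)) * norm (w ^ k)))"
    using u w by (intro rapid_decay_binomial) (auto simp: quasinilpotent_iff_rapid_decay)
  ultimately show ?thesis
    unfolding quasinilpotent_iff_rapid_decay by (rule rapid_decay_mono[rotated])
qed

lemma quasinilpotent_add_skew_commute:
  fixes u w s t :: "'a::real_normed_algebra_1"
  assumes skew: "u * w = s * (w * u)" and inverse: "s * t = 1" "t * s = 1"
    and s_u: "s * u = u * s" and s_w: "s * w = w * s"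
    and contraction: "norm s \<le> 1 \<or> norm t \<le> 1"
    and u: "quasinilpotent u" and w: "quasinilpotent w"
  shows "quasinilpotent (u + w)"
  using contraction
proof
  assume "norm s \<le> 1"
  with skew s_w s_u have "quasinilpotent (w + u)"
    using w u by (rule quasinilpotent_add_skew_commute_le_1)
  thus ?thesis by (simp add: add.commute)
next
  assume "norm t \<le> 1"
  have commutes: "t * z = z * t" if "s * z = z * s" for z
  proof -
    have "t * z = t * z * (s * t)" using inverse by simp
    also have "\<dots> = (t * s) * z * t" using that by (simp add: mult.assoc)
    finally show ?thesis using inverse by simp
  qed
  have "w * u = t * (u * w)"
    using skew inverse by (simp add: mult.assoc[symmetric])
  thus ?thesis
    using commutes[OF s_u] commutes[OF s_w] \<open>norm t \<le> 1\<close> u w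
    by (rule quasinilpotent_add_skew_commute_le_1)
qed

section \<open>The normed algebra of \<open>2 \<times> 2\<close> matrices\<close>

text \<open>The maximal row-sum norm makes \<open>'a m2\<close> a unital normed algebra; it is equivalent to
  the norm of the model \<open>'a^2^2\<close> used in the statement (\<open>norm_vec_le_norm_m2\<close>,
  \<open>norm_m2_le_norm_vec\<close>).\<close>

datatype 'a m2 = M2 (m11: 'a) (m12: 'a) (m21: 'a) (m22: 'a)

instantiation m2 :: (real_algebra_1) real_algebra_1
begin

definition "(0 :: 'a m2) = M2 0 0 0 0"
definition "(1 :: 'a m2) = M2 1 0 0 1"
definition "(x :: 'a m2) + y = M2 (m11 x + m11 y) (m12 x + m12 y) (m21 x + m21 y) (m22 x + m22 y)"
definition "(x :: 'a m2) - y = M2 (m11 x - m11 y) (m12 x - m12 y) (m21 x - m21 y) (m22 x - m22 y)"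
definition "- (x :: 'a m2) = M2 (- m11 x) (- m12 x) (- m21 x) (- m22 x)"
definition "(x :: 'a m2) * y = M2 (m11 x * m11 y + m12 x * m21 y) (m11 x * m12 y + m12 x * m22 y)
  (m21 x * m11 y + m22 x * m21 y) (m21 x * m12 y + m22 x * m22 y)"
definition "scaleR r (x :: 'a m2) = M2 (r *\<^sub>R m11 x) (r *\<^sub>R m12 x) (r *\<^sub>R m21 x) (r *\<^sub>R m22 x)"

lemma m2_ops [simp]:
  "0 = M2 0 0 0 0" "1 = M2 1 0 0 1"
  "M2 a b c d + M2 a' b' c' d' = M2 (a + a') (b + b') (c + c') (d + d')"
  "M2 a b c d - M2 a' b' c' d' = M2 (a - a') (b - b') (c - c') (d - d')"
  "- M2 a b c d = M2 (- a) (- b) (- c) (- d)"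
  "M2 a b c d * M2 a' b' c' d'
    = M2 (a * a' + b * c') (a * b' + b * d') (c * a' + d * c') (c * b' + d * d')"
  "r *\<^sub>R M2 a b c d = M2 (r *\<^sub>R a) (r *\<^sub>R b) (r *\<^sub>R c) (r *\<^sub>R d)"
  by (simp_all add: zero_m2_def one_m2_def plus_m2_def minus_m2_def uminus_m2_def
      times_m2_def scaleR_m2_def)

instance
proof
  fix x y z :: "'a m2" and r s :: real
  show "x + y + z = x + (y + z)" "x + y = y + x" "0 + x = x" "- x + x = 0" "x - y = x + - y"
    "x * y * z = x * (y * z)" "1 * x = x" "x * 1 = x"
    "(x + y) * z = x * z + y * z" "x * (y + z) = x * y + x * z"
    "r *\<^sub>R (x + y) = r *\<^sub>R x + r *\<^sub>R y" "(r + s) *\<^sub>R x = r *\<^sub>R x + s *\<^sub>R x"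
    "r *\<^sub>R s *\<^sub>R x = (r * s) *\<^sub>R x" "1 *\<^sub>R x = x"
    "r *\<^sub>R x * y = r *\<^sub>R (x * y)" "x * r *\<^sub>R y = r *\<^sub>R (x * y)"
    by (cases x; cases y; cases z; simp add: algebra_simps scaleR_add_right scaleR_add_left)+
  show "(0::'a m2) \<noteq> 1" by simp
qed

end

instantiation m2 :: (real_normed_algebra_1) real_normed_algebra_1
begin

definition norm_m2_def:
  "norm (x :: 'a m2) = max (norm (m11 x) + norm (m12 x)) (norm (m21 x) + norm (m22 x))"
definition sgn_m2_def: "sgn (x :: 'a m2) = x /\<^sub>R norm x"
definition dist_m2_def: "dist (x :: 'a m2) y = norm (x - y)"
definition uniformity_m2_def:
  "(uniformity :: ('a m2 \<times> 'a m2) filter) = (INF e\<in>{0 <..}. principal {(x, y). dist x y < e})"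
definition open_m2_def:
  "open (U :: 'a m2 set) \<longleftrightarrow> (\<forall>x\<in>U. eventually (\<lambda>(x', y). x' = x \<longrightarrow> y \<in> U) uniformity)"

lemma norm_M2 [simp]: "norm (M2 a b c d) = max (norm a + norm b) (norm c + norm d)"
  by (simp add: norm_m2_def)

instance
proof
  fix x y :: "'a m2" and r :: real
  show "norm (1::'a m2) = 1" by simp
  have "max (norm a + norm b) (norm c + norm d) = 0 \<longleftrightarrow> a = 0 \<and> b = 0 \<and> c = 0 \<and> d = 0"
    for a b c d :: 'a
    using norm_ge_zero[of a] norm_ge_zero[of b] norm_ge_zero[of c] norm_ge_zero[of d]
      norm_eq_zero[of a] norm_eq_zero[of b] norm_eq_zero[of c] norm_eq_zero[of d]
    by linarith
  thus "norm x = 0 \<longleftrightarrow> x = 0" by (cases x) simp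
  show "norm (x + y) \<le> norm x + norm y"
  proof (cases x; cases y)
    fix a b c d a' b' c' d' assume xy: "x = M2 a b c d" "y = M2 a' b' c' d'"
    have "norm (a + a') + norm (b + b') \<le> (norm a + norm b) + (norm a' + norm b')"
      "norm (c + c') + norm (d + d') \<le> (norm c + norm d) + (norm c' + norm d')"
      using norm_triangle_ineq[of a a'] norm_triangle_ineq[of b b']
        norm_triangle_ineq[of c c'] norm_triangle_ineq[of d d'] by linarith+
    thus ?thesis unfolding xy by (simp add: max_def)
  qed
  show "norm (r *\<^sub>R x) = \<bar>r\<bar> * norm x"
    by (cases x) (simp add: max_mult_distrib_left distrib_left)
  show "norm (x * y) \<le> norm x * norm y"
  proof (cases x; cases y)
    fix a b c d a' b' c' d' assume xy: "x = M2 a b c d" "y = M2 a' b' c' d'"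
    have row: "norm (p * a' + q * c') + norm (p * b' + q * d') \<le> (norm p + norm q) * norm y"
      for p q :: 'a
    proof -
      have "norm (p * a' + q * c') + norm (p * b' + q * d')
          \<le> norm p * (norm a' + norm b') + norm q * (norm c' + norm d')"
        using norm_triangle_ineq[of "p * a'" "q * c'"] norm_triangle_ineq[of "p * b'" "q * d'"]
          norm_mult_ineq[of p a'] norm_mult_ineq[of q c'] norm_mult_ineq[of p b']
          norm_mult_ineq[of q d']
        by (simp add: distrib_left)
      also have "\<dots> \<le> norm p * norm y + norm q * norm y"
        unfolding xy by (intro add_mono mult_left_mono) simp_all
      finally show ?thesis by (simp add: distrib_right)
    qed
    have "norm a + norm b \<le> norm x" "norm c + norm d \<le> norm x" "0 \<le> norm y"
      unfolding xy by (simp_all add: le_max_iff_disj)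
    hence "norm (a * a' + b * c') + norm (a * b' + b * d') \<le> norm x * norm y"
      "norm (c * a' + d * c') + norm (c * b' + d * d') \<le> norm x * norm y"
      using row[of a b] row[of c d] mult_right_mono[of _ "norm x" "norm y"] by (meson order_trans)+
    moreover have "norm (x * y) = max (norm (a * a' + b * c') + norm (a * b' + b * d'))
        (norm (c * a' + d * c') + norm (c * b' + d * d'))"
      unfolding xy by simp
    ultimately show ?thesis by simp
  qed
qed (simp_all add: sgn_m2_def dist_m2_def uniformity_m2_def open_m2_def)

end

lemma power_M2_diag: "M2 a 0 0 d ^ n = M2 (a ^ n) 0 0 (d ^ n)"
  by (induction n) simp_all

lemma power_M2_antidiag_even: "M2 0 b c 0 ^ (2 * n) = M2 ((b * c) ^ n) 0 0 ((c * b) ^ n)"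
  by (induction n) (simp_all add: mult.assoc)

lemma power_M2_antidiag_odd:
  "M2 0 b c 0 ^ Suc (2 * n) = M2 0 (b * (c * b) ^ n) (c * (b * c) ^ n) 0"
  by (simp add: power_M2_antidiag_even)

lemma quasinilpotent_M2_diag:
  fixes a d :: "'a::real_normed_algebra_1"
  assumes "quasinilpotent a" "quasinilpotent d"
  shows "quasinilpotent (M2 a 0 0 d)"
proof -
  have "rapid_decay (\<lambda>n. norm (a ^ n) + norm (d ^ n))"
    using assms by (intro rapid_decay_add) (simp_all add: quasinilpotent_iff_rapid_decay)
  thus ?thesis
    unfolding quasinilpotent_iff_rapid_decay power_M2_diag
    by (rule rapid_decay_mono) simp
qed

lemma quasinilpotent_M2_antidiag:
  fixes b c :: "'a::real_normed_algebra_1"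
  assumes bc: "quasinilpotent (b * c)"
  shows "quasinilpotent (M2 0 b c 0)"
proof -
  have bc': "rapid_decay (\<lambda>n. norm ((b * c) ^ n))" and cb': "rapid_decay (\<lambda>n. norm ((c * b) ^ n))"
    using bc quasinilpotent_mult_commute[OF bc] by (simp_all add: quasinilpotent_iff_rapid_decay)
  have "rapid_decay (\<lambda>n. norm (M2 0 b c 0 ^ (2 * n)))"
    using rapid_decay_add[OF bc' cb'] by (rule rapid_decay_mono) (simp add: power_M2_antidiag_even)
  moreover have "rapid_decay (\<lambda>n. norm (M2 0 b c 0 ^ Suc (2 * n)))"
  proof (rule rapid_decay_mono)
    show "rapid_decay
        (\<lambda>n. norm b * 1 ^ n * norm ((c * b) ^ n) + norm c * 1 ^ n * norm ((b * c) ^ n))"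
      using bc' cb' by (intro rapid_decay_add rapid_decay_scale) simp_all
    show "norm (M2 0 b c 0 ^ Suc (2 * n))
        \<le> norm b * 1 ^ n * norm ((c * b) ^ n) + norm c * 1 ^ n * norm ((b * c) ^ n)" for n
      unfolding power_M2_antidiag_odd
      using norm_mult_ineq[of b "(c * b) ^ n"] norm_mult_ineq[of c "(b * c) ^ n"]
      by (simp add: add_increasing add_increasing2)
  qed
  ultimately show ?thesis
    unfolding quasinilpotent_iff_rapid_decay by (rule rapid_decay_even_odd)
qed

lemma is_gdrazin_M2_diag:
  fixes a a' d d' :: "'a::real_normed_algebra_1"
  assumes a: "is_gdrazin a a'" and d: "is_gdrazin d d'"
  shows "is_gdrazin (M2 a 0 0 d) (M2 a' 0 0 d')"
  using assms quasinilpotent_M2_diag[OF gdrazin_quasinilpotent[OF a] gdrazin_quasinilpotent[OF d]]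
  by (simp add: is_gdrazin_def)

lemma is_gdrazin_M2_antidiag:
  fixes b c y :: "'a::real_normed_algebra_1"
  assumes gd: "is_gdrazin (b * c) y"
  shows "is_gdrazin (M2 0 b c 0) (M2 0 (y * b) (c * y) 0)"
proof -
  let ?p = "1 - b * c * y"
  have commute: "y * (b * c) = b * (c * y)" "y * (b * (c * z)) = b * (c * (y * z))" for z
    using gdrazin_commute[OF gd] by (metis mult.assoc)+
  have right: "b * (c * (y * y)) = y"
    using gdrazin_mult_square[OF gd] by (simp add: mult.assoc)
  have inner: "y * (b * (c * (y * z))) = y * z" for z
    using gdrazin_outer_inverse[OF gd] by (metis mult.assoc)
  have "M2 0 b c 0 - M2 0 b c 0 * M2 0 b c 0 * M2 0 (y * b) (c * y) 0 = M2 0 (?p * b) (c * ?p) 0"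
    by (simp add: algebra_simps)
  moreover have "quasinilpotent (M2 0 (?p * b) (c * ?p) 0)"
  proof (rule quasinilpotent_M2_antidiag)
    have "?p * b * (c * ?p) = b * c - b * c * (b * c) * y"
      using gdrazin_spectral_idempotent[OF gd] gdrazin_spectral_commute[OF gd]
      by (simp add: algebra_simps) (metis mult.assoc)
    thus "quasinilpotent (?p * b * (c * ?p))" using gdrazin_quasinilpotent[OF gd] by simp
  qed
  ultimately show ?thesis
    unfolding is_gdrazin_def using commute inner right by (simp add: algebra_simps)
qed

lemma scaleC_zero [simp]: "scaleC a (0::'a::cbanach_algebra) = 0"
  by (metis mult_zero_left scaleC_right_mult)

lemma scaleC_one_mult: "scaleC a 1 * x = scaleC a (x::'a::cbanach_algebra)"
  by (simp add: scaleC_left_mult)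

lemma mult_scaleC_one: "x * scaleC a 1 = scaleC a (x::'a::cbanach_algebra)"
  by (simp add: scaleC_right_mult)

definition scalar_M2 :: "complex \<Rightarrow> 'a::cbanach_algebra m2" where
  "scalar_M2 z = M2 (scaleC z 1) 0 0 (scaleC z 1)"

lemma scalar_M2_mult:
  "scalar_M2 z * M2 a b c d = M2 (scaleC z a) (scaleC z b) (scaleC z c) (scaleC z d)"
  by (simp add: scalar_M2_def scaleC_one_mult)

lemma scalar_M2_commute: "scalar_M2 z * x = x * scalar_M2 z"
  by (cases x) (simp add: scalar_M2_def scaleC_one_mult mult_scaleC_one)

lemma scalar_M2_inverse: "z \<noteq> 0 \<Longrightarrow> scalar_M2 z * scalar_M2 (inverse z) = 1"
  by (simp add: scalar_M2_def scaleC_one_mult scaleC_scaleC scaleC_one)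

lemma norm_scalar_M2: "norm (scalar_M2 z :: 'a::cbanach_algebra m2) = cmod z"
  by (simp add: scalar_M2_def norm_scaleC)

lemma quasinilpotent_add_scalar_skew_commute:
  fixes u w :: "'a::cbanach_algebra m2"
  assumes skew: "u * w = scalar_M2 z * (w * u)" and "z \<noteq> 0"
    and "quasinilpotent u" "quasinilpotent w"
  shows "quasinilpotent (u + w)"
proof (rule quasinilpotent_add_skew_commute[OF skew])
  show "scalar_M2 z * scalar_M2 (inverse z) = 1"
    "scalar_M2 (inverse z) * scalar_M2 z = (1 :: 'a m2)"
    using \<open>z \<noteq> 0\<close> by (simp_all add: scalar_M2_inverse scalar_M2_commute[of "inverse z"])
  show "norm (scalar_M2 z :: 'a m2) \<le> 1 \<or> norm (scalar_M2 (inverse z) :: 'a m2) \<le> 1"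
    by (auto simp: norm_scalar_M2 norm_inverse inverse_le_1_iff)
qed (use assms scalar_M2_commute in auto)


definition m2_of_vec :: "'a::zero^2^2 \<Rightarrow> 'a m2" where
  "m2_of_vec X = M2 (X $ 1 $ 1) (X $ 1 $ 2) (X $ 2 $ 1) (X $ 2 $ 2)"

lemma m2_of_vec_inject: "(X :: 'a::zero^2^2) = Y \<longleftrightarrow> m2_of_vec X = m2_of_vec Y"
  by (auto simp: m2_of_vec_def vec_eq_iff forall_2)

lemma m2_of_vec_mat2 [simp]: "m2_of_vec (mat2 a b c d) = M2 a b c d"
  by (simp add: m2_of_vec_def mat2_def)

lemma m2_of_vec_mult [simp]:
  "m2_of_vec (X ** Y) = m2_of_vec X * m2_of_vec (Y :: 'a::real_algebra_1^2^2)"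
  by (simp add: m2_of_vec_def matrix_matrix_mult_def sum_2)

lemma m2_of_vec_diff [simp]:
  "m2_of_vec (X - Y) = m2_of_vec X - m2_of_vec (Y :: 'a::real_algebra_1^2^2)"
  by (simp add: m2_of_vec_def)

lemma m2_of_vec_one [simp]: "m2_of_vec (mat 1 :: 'a::real_algebra_1^2^2) = 1"
  by (simp add: m2_of_vec_def mat_def)

lemma m2_of_vec_mpow [simp]: "m2_of_vec (mpow X n) = m2_of_vec (X :: 'a::real_algebra_1^2^2) ^ n"
  by (induction n) simp_all

lemma norm_vec2_le: "norm (x :: 'a::real_normed_vector^2) \<le> norm (x $ 1) + norm (x $ 2)"
  using L2_set_le_sum[of UNIV "\<lambda>i. norm (x $ i)"] by (simp add: norm_vec_def sum_2)

lemma norm_vec_le_norm_m2: "norm (X :: 'a::real_normed_algebra_1^2^2) \<le> 2 * norm (m2_of_vec X)"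
proof -
  have "norm X \<le> (norm (X $ 1 $ 1) + norm (X $ 1 $ 2)) + (norm (X $ 2 $ 1) + norm (X $ 2 $ 2))"
    using norm_vec2_le[of X] norm_vec2_le[of "X $ 1"] norm_vec2_le[of "X $ 2"] by linarith
  thus ?thesis by (simp add: m2_of_vec_def max_def)
qed

lemma norm_m2_le_norm_vec: "norm (m2_of_vec X) \<le> 2 * norm (X :: 'a::real_normed_algebra_1^2^2)"
proof -
  have entry: "norm (X $ i $ j) \<le> norm X" for i j
    by (rule order_trans[OF Finite_Cartesian_Product.norm_nth_le
        Finite_Cartesian_Product.norm_nth_le])
  show ?thesis
    using entry[of 1 1] entry[of 1 2] entry[of 2 1] entry[of 2 2] by (simp add: m2_of_vec_def)
qed

lemma mquasinilpotent_iff_m2: "mquasinilpotent X \<longleftrightarrow> quasinilpotent (m2_of_vec X)"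
proof -
  have "rapid_decay (\<lambda>n. norm (mpow X n)) \<longleftrightarrow> rapid_decay (\<lambda>n. norm (m2_of_vec X ^ n))"
  proof
    assume "rapid_decay (\<lambda>n. norm (mpow X n))"
    hence "rapid_decay (\<lambda>n. 2 * 1 ^ n * norm (mpow X n))" by (intro rapid_decay_scale) simp_all
    thus "rapid_decay (\<lambda>n. norm (m2_of_vec X ^ n))"
      by (rule rapid_decay_mono) (metis m2_of_vec_mpow norm_m2_le_norm_vec power_one mult_1_right)
  next
    assume "rapid_decay (\<lambda>n. norm (m2_of_vec X ^ n))"
    hence "rapid_decay (\<lambda>n. 2 * 1 ^ n * norm (m2_of_vec X ^ n))"
      by (intro rapid_decay_scale) simp_all
    thus "rapid_decay (\<lambda>n. norm (mpow X n))"
      by (rule rapid_decay_mono) (metis m2_of_vec_mpow norm_vec_le_norm_m2 power_one mult_1_right)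
  qed
  thus ?thesis
    unfolding mquasinilpotent_def quasinilpotent_def by (simp add: rapid_decay_iff_root)
qed

lemma mis_gdrazin_iff_m2: "mis_gdrazin X Y \<longleftrightarrow> is_gdrazin (m2_of_vec X) (m2_of_vec Y)"
  unfolding mis_gdrazin_def is_gdrazin_def mquasinilpotent_iff_m2
  by (simp add: m2_of_vec_inject[of "X ** Y"] m2_of_vec_inject[of Y])

lemma power_Suc_mult_eq_0: "x * y = 0 \<Longrightarrow> x ^ Suc k * y = (0 :: 'a::ring_1)"
  by (simp add: power_Suc2 mult.assoc del: power_Suc)

lemma mult_power_Suc_eq_0: "x * y = 0 \<Longrightarrow> x * y ^ Suc k = (0 :: 'a::ring_1)"
  by (simp add: mult.assoc[symmetric])

lemma m2_of_vec_zero [simp]: "m2_of_vec (0 :: 'a::real_algebra_1^2^2) = 0"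
  by (simp add: m2_of_vec_def)

lemma mgd_eqI:
  assumes gd: "is_gdrazin (m2_of_vec X) (m2_of_vec Y)"
  shows "X \<in> mgd_set" "mgd X = Y"
proof -
  have XY: "mis_gdrazin X Y" using gd by (simp add: mis_gdrazin_iff_m2)
  thus "X \<in> mgd_set" unfolding mgd_set_def by blast
  show "mgd X = Y"
    unfolding mgd_def using XY
  proof (rule the_equality)
    fix Z assume "mis_gdrazin X Z"
    hence "is_gdrazin (m2_of_vec X) (m2_of_vec Z)" by (simp add: mis_gdrazin_iff_m2)
    thus "Z = Y" using is_gdrazin_unique[OF _ gd] by (simp add: m2_of_vec_inject)
  qed
qed


section \<open>The corner conditions\<close>

locale skew_corner =
  fixes A B C D :: "'a::cbanach_algebra" and lam :: complex
  assumes lam_nonzero: "lam \<noteq> 0" and A_gd: "A \<in> gd_set" and BC_gd: "B * C \<in> gd_set"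
    and corner: "A * B = scaleC lam (gpi A * B * D * gpi (C * B))"
begin

lemma is_gdrazin_A: "is_gdrazin A (gd A)"
  using A_gd by (rule is_gdrazin_gd)

lemma is_gdrazin_BC: "is_gdrazin (B * C) (gd (B * C))"
  using BC_gd by (rule is_gdrazin_gd)

lemma gd_CB_eq: "gd (C * B) = C * gd (B * C) * gd (B * C) * B"
  using is_gdrazin_mult_commute[OF is_gdrazin_BC] by (rule gd_eqI)

lemma is_gdrazin_CB: "is_gdrazin (C * B) (gd (C * B))"
  using is_gdrazin_mult_commute[OF is_gdrazin_BC] by (simp add: gd_CB_eq)

lemma B_gd_CB: "B * gd (C * B) = gd (B * C) * B"
  using gdrazin_mult_square[OF is_gdrazin_BC] unfolding gd_CB_eq by (metis mult.assoc)

lemma gpi_BC_B: "gpi (B * C) * B = B * gpi (C * B)"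
  using gdrazin_mult_square[OF is_gdrazin_BC] unfolding gpi_def gd_CB_eq
  by (simp add: algebra_simps) (metis mult.assoc)

lemma gd_A_B: "gd A * B = 0"
proof -
  have "gd A * (A * B) = scaleC lam (gd A * gpi A * (B * D * gpi (C * B)))"
    by (simp add: corner scaleC_right_mult mult.assoc)
  also have "gd A * gpi A = 0"
    unfolding gpi_def by (rule gdrazin_spectral_annihilates(2)[OF is_gdrazin_A])
  finally have "gd A * (A * B) = 0" by simp
  hence "gd A * (gd A * (A * B)) = 0" by simp
  thus ?thesis using gdrazin_square_mult[OF is_gdrazin_A] by (metis mult.assoc)
qed

lemma gpi_A_B: "gpi A * B = B"
  unfolding gpi_def by (simp add: left_diff_distrib mult.assoc gd_A_B)

lemma A_B_gd_CB: "A * B * gd (C * B) = 0"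
proof -
  have "A * B * gd (C * B) = scaleC lam (B * D * (gpi (C * B) * gd (C * B)))"
    by (simp add: corner gpi_A_B scaleC_left_mult mult.assoc)
  also have "gpi (C * B) * gd (C * B) = 0"
    unfolding gpi_def by (rule gdrazin_spectral_annihilates(1)[OF is_gdrazin_CB])
  finally show ?thesis by simp
qed

end

locale skew_block = corner: skew_corner A B C D lam + swapped: skew_corner D C B A lam
  for A B C D :: "'a::cbanach_algebra" and lam :: complex
begin

lemma D_CB_gd_CB: "D * (C * B) * gd (C * B) = 0"
proof -
  have "D * C = scaleC lam (C * A * gpi (B * C))"
    using swapped.corner swapped.gpi_A_B by simp
  hence "D * (C * B) = scaleC lam (C * A * (gpi (B * C) * B))"
    by (simp add: mult.assoc[symmetric] scaleC_left_mult)
  also have "C * A * (gpi (B * C) * B) = C * (A * B) * gpi (C * B)"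
    by (simp add: corner.gpi_BC_B mult.assoc)
  also have "\<dots> = scaleC lam (C * B * D * (gpi (C * B) * gpi (C * B)))"
    by (simp add: corner.corner corner.gpi_A_B scaleC_left_mult scaleC_right_mult mult.assoc)
  also have "gpi (C * B) * gpi (C * B) = gpi (C * B)"
    unfolding gpi_def by (rule gdrazin_spectral_idempotent[OF corner.is_gdrazin_CB])
  finally have "D * (C * B) * gd (C * B)
      = scaleC (lam * lam) (C * B * D * (gpi (C * B) * gd (C * B)))"
    by (simp add: scaleC_scaleC scaleC_left_mult mult.assoc)
  also have "gpi (C * B) * gd (C * B) = 0"
    unfolding gpi_def by (rule gdrazin_spectral_annihilates(1)[OF corner.is_gdrazin_CB])
  finally show ?thesis by simp
qed

lemma A_B: "A * B = scaleC lam (B * D)"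
proof -
  have "B * D * gpi (C * B) = B * D - B * (D * (C * B) * gd (C * B))"
    unfolding gpi_def by (simp add: algebra_simps)
  thus ?thesis using corner.corner D_CB_gd_CB by (simp add: corner.gpi_A_B)
qed

end

sublocale skew_block \<subseteq> swapped_block: skew_block D C B A lam
  by unfold_locales

text \<open>Facts about \<open>skew_block\<close> become available for the instance \<open>swapped_block\<close> only
  in a later context block, hence the repeated \<open>context skew_block\<close> below.\<close>

context skew_block
begin

lemma C_A: "C * A = scaleC (inverse lam) (D * C)"
  using swapped_block.A_B corner.lam_nonzero by (simp add: scaleC_scaleC scaleC_one)

lemma C_A_power: "C * A ^ n = scaleC (inverse lam ^ n) (D ^ n * C)"
proof (induction n)
  case (Suc n)
  have "C * A ^ Suc n = C * A ^ n * A" by (simp only: power_Suc2 mult.assoc)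
  also have "\<dots> = scaleC (inverse lam ^ n) (D ^ n * (C * A))"
    by (simp only: Suc scaleC_left_mult mult.assoc)
  also have "\<dots> = scaleC (inverse lam ^ n * inverse lam) (D ^ n * D * C)"
    by (simp only: C_A scaleC_right_mult scaleC_scaleC mult.assoc)
  also have "\<dots> = scaleC (inverse lam ^ Suc n) (D ^ Suc n * C)"
    by (simp only: power_Suc2)
  finally show ?case .
qed (simp add: scaleC_one)

lemma C_gd_A: "C * gd A = 0"
proof (rule mult_gdrazin_inverse_eq_0[OF corner.is_gdrazin_A
      gdrazin_quasinilpotent[OF swapped.is_gdrazin_A] norm_ge_zero norm_ge_zero])
  fix n
  have "C * A ^ n = scaleC (inverse lam ^ n) ((D - D * D * gd D) ^ n * C)"
    by (simp add: C_A_power gdrazin_power_mult_spectral[OF swapped.is_gdrazin_A]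
        swapped.gpi_A_B[unfolded gpi_def])
  hence "norm (C * A ^ n) = cmod (inverse lam) ^ n * norm ((D - D * D * gd D) ^ n * C)"
    by (simp add: norm_scaleC norm_power)
  also have "\<dots> \<le> cmod (inverse lam) ^ n * (norm ((D - D * D * gd D) ^ n) * norm C)"
    by (intro mult_left_mono norm_mult_ineq) simp
  finally show "norm (C * A ^ n) \<le> norm C * cmod (inverse lam) ^ n * norm ((D - D * D * gd D) ^ n)"
    by (simp add: mult_ac)
qed

end

context skew_block
begin

lemma BC_A: "B * C * A = scaleC (inverse lam * inverse lam) (A * (B * C))"
proof -
  have "B * C * A = scaleC (inverse lam) (B * D * C)"
    by (simp add: C_A scaleC_right_mult mult.assoc)
  also have "B * D = scaleC (inverse lam) (A * B)" by (rule swapped_block.C_A)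
  finally show ?thesis by (simp add: scaleC_left_mult scaleC_scaleC mult.assoc)
qed

lemma BC_power_A: "(B * C) ^ n * A = scaleC ((inverse lam * inverse lam) ^ n) (A * (B * C) ^ n)"
proof (induction n)
  case (Suc n)
  have "(B * C) ^ Suc n * A = B * C * ((B * C) ^ n * A)" by (simp only: power_Suc mult.assoc)
  also have "\<dots> = scaleC ((inverse lam * inverse lam) ^ n) (B * C * A * (B * C) ^ n)"
    by (simp only: Suc scaleC_right_mult mult.assoc)
  also have "\<dots> = scaleC ((inverse lam * inverse lam) ^ n * (inverse lam * inverse lam))
      (A * (B * C) * (B * C) ^ n)"
    by (simp only: BC_A scaleC_left_mult scaleC_scaleC)
  also have "\<dots> = scaleC ((inverse lam * inverse lam) ^ Suc n) (A * (B * C) ^ Suc n)"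
    by (simp only: power_Suc2[of "inverse lam * inverse lam"] power_Suc[of "B * C"] mult.assoc)
  finally show ?case .
qed (simp add: scaleC_one)

lemma gd_BC_A: "gd (B * C) * A = 0"
proof (rule gdrazin_inverse_mult_eq_0[OF corner.is_gdrazin_BC
      gdrazin_quasinilpotent[OF corner.is_gdrazin_BC] norm_ge_zero norm_ge_zero])
  fix n
  let ?q = "B * C - B * C * (B * C) * gd (B * C)"
  have "A * (1 - B * C * gd (B * C)) = A"
    using swapped_block.D_CB_gd_CB by (simp add: algebra_simps)
  hence "(B * C) ^ n * A = scaleC ((inverse lam * inverse lam) ^ n) (A * ?q ^ n)"
    by (simp add: BC_power_A mult_power_gdrazin_spectral[OF corner.is_gdrazin_BC])
  hence "norm ((B * C) ^ n * A) = cmod (inverse lam * inverse lam) ^ n * norm (A * ?q ^ n)"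
    by (simp add: norm_scaleC norm_power)
  also have "\<dots> \<le> cmod (inverse lam * inverse lam) ^ n * (norm A * norm (?q ^ n))"
    by (intro mult_left_mono norm_mult_ineq) simp
  finally show "norm ((B * C) ^ n * A)
      \<le> norm A * cmod (inverse lam * inverse lam) ^ n * norm (?q ^ n)"
    by (simp add: mult_ac)
qed

lemma A_gd_BC: "A * gd (B * C) = 0"
  using swapped_block.D_CB_gd_CB gdrazin_mult_square[OF corner.is_gdrazin_BC]
  by (metis mult.assoc mult_zero_left)

lemma zero_products:
  "gd A * B = 0" "C * gd A = 0" "gd (B * C) * A = 0" "A * gd (B * C) = 0" "A * (B * gd (C * B)) = 0"
  using corner.gd_A_B C_gd_A gd_BC_A A_gd_BC corner.A_B_gd_CB by (simp_all add: mult.assoc)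

end

context skew_block
begin

lemma corner_defects_skew_commute:
  "(A - A * A * gd A) * (B - B * C * (B * gd (C * B)))
    = scaleC lam ((B - B * C * (B * gd (C * B))) * (D - D * D * gd D))"
proof -
  have A_BCB: "A * (B * (C * (B * gd (C * B)))) = 0"
    using corner.A_B_gd_CB gdrazin_commute[OF corner.is_gdrazin_CB]
    by (metis mult.assoc mult_zero_left)
  have B_DD: "B * (D * (D * gd D)) = 0"
    using swapped_block.zero_products(2) gdrazin_commute[OF swapped.is_gdrazin_A]
    by (metis mult.assoc mult_zero_left)
  have gdA_B: "gd A * (B * z) = 0" and gdCB_D: "gd (C * B) * (D * z) = 0" for z
    using zero_products(1) swapped_block.zero_products(3) by (metis mult.assoc mult_zero_left)+
  have "(A - A * A * gd A) * (B - B * C * (B * gd (C * B))) = A * B"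
    using A_BCB gdA_B zero_products(1) by (simp add: algebra_simps)
  moreover have "(B - B * C * (B * gd (C * B))) * (D - D * D * gd D) = B * D"
    using B_DD gdCB_D swapped_block.zero_products(3) by (simp add: algebra_simps)
  ultimately show ?thesis by (simp add: A_B)
qed

end

context skew_block
begin

lemma is_gdrazin_diag_block: "is_gdrazin (M2 A 0 0 D) (M2 (gd A) 0 0 (gd D))"
  by (rule is_gdrazin_M2_diag[OF corner.is_gdrazin_A swapped.is_gdrazin_A])

lemma is_gdrazin_antidiag_block:
  "is_gdrazin (M2 0 B C 0) (M2 0 (B * gd (C * B)) (C * gd (B * C)) 0)"
  using is_gdrazin_M2_antidiag[OF corner.is_gdrazin_BC] by (simp add: corner.B_gd_CB)

lemma is_gdrazin_block:
  "is_gdrazin (M2 A B C D) (M2 (gd A) (B * gd (C * B)) (C * gd (B * C)) (gd D))"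
proof -
  let ?P = "M2 A 0 0 D" and ?Pd = "M2 (gd A) 0 0 (gd D)"
  let ?Q = "M2 0 B C 0" and ?Qd = "M2 0 (B * gd (C * B)) (C * gd (B * C)) 0"
  note P = is_gdrazin_diag_block and Q = is_gdrazin_antidiag_block
  have "(?P - ?P * ?P * ?Pd) * (?Q - ?Q * ?Q * ?Qd)
      = scalar_M2 lam * ((?Q - ?Q * ?Q * ?Qd) * (?P - ?P * ?P * ?Pd))"
    using corner_defects_skew_commute swapped_block.corner_defects_skew_commute
    by (simp add: scalar_M2_mult)
  hence "quasinilpotent (?P - ?P * ?P * ?Pd + (?Q - ?Q * ?Q * ?Qd))"
    using corner.lam_nonzero gdrazin_quasinilpotent[OF P] gdrazin_quasinilpotent[OF Q]
    by (rule quasinilpotent_add_scalar_skew_commute)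
  hence "is_gdrazin (?P + ?Q) (?Pd + ?Qd)"
    using zero_products swapped_block.zero_products
    by (intro is_gdrazin_add[OF P Q]) (simp_all add: mult.assoc)
  thus ?thesis by simp
qed

lemma gpi_BC_gd_A: "gpi (B * C) * gd A = gd A"
proof -
  have "gd (B * C) * gd A = gd (B * C) * A * (gd A * gd A)"
    using gdrazin_mult_square[OF corner.is_gdrazin_A] by (simp add: mult.assoc)
  thus ?thesis unfolding gpi_def using zero_products(3) by (simp add: algebra_simps)
qed

lemma C_gd_BC_gpi_A: "C * gd (B * C) * gpi A = C * gd (B * C)"
  unfolding gpi_def using zero_products(3) by (simp add: algebra_simps mult.assoc[symmetric])

lemma gd_antidiag_mult_diag: "M2 0 (B * gd (C * B)) (C * gd (B * C)) 0 * M2 A 0 0 D = 0"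
  using zero_products(3) swapped_block.zero_products(3) by (simp add: mult.assoc)

lemma antidiag_mult_gd_diag: "M2 0 B C 0 * M2 (gd A) 0 0 (gd D) = 0"
  using zero_products(2) swapped_block.zero_products(2) by simp

end

theorem theorem3p3:
  fixes A B C D :: "'a::cbanach_algebra" and lam :: complex
    and M P Q :: "'a^2^2"
  assumes "lam \<noteq> 0"
    and "A \<in> gd_set" and "D \<in> gd_set"
    and "B * C \<in> gd_set" and "C * B \<in> gd_set"
    and "A * B = scaleC lam (gpi A * B * D * gpi (C * B))"
    and "D * C = scaleC lam (gpi D * C * A * gpi (B * C))"
    and "M = mat2 A B C D"
    and "P = mat2 A 0 0 D"
    and "Q = mat2 0 B C 0"
  shows "M \<in> mgd_set \<and>
    mgd M =
      mat2 (gpi (B * C) * gd A) (B * gd (C * B) * gpi D)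
           (C * gd (B * C) * gpi A) (gpi (C * B) * gd D)
    + (\<Sum>n. mpow (mgd Q) (n + 2) ** P ** mpow M n ** mpi P)
    + mpi Q ** (\<Sum>n. mpow M n ** Q ** mpow (mgd P) (n + 2))
    - (\<Sum>n. \<Sum>k. mpow (mgd Q) (k + 1) ** P ** mpow M (n + k) ** Q ** mpow (mgd P) (n + 2))
    - (\<Sum>n. mpow (mgd Q) (n + 2) ** P ** mpow M n ** Q ** mgd P)"
proof -
  interpret skew_block A B C D lam
    using assms(1-7) by unfold_locales simp_all
  have M: "M \<in> mgd_set" "mgd M = mat2 (gd A) (B * gd (C * B)) (C * gd (B * C)) (gd D)"
    using mgd_eqI[of M "mat2 (gd A) (B * gd (C * B)) (C * gd (B * C)) (gd D)"] is_gdrazin_block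
    by (simp_all add: assms(8))
  have P: "mgd P = mat2 (gd A) 0 0 (gd D)"
    using mgd_eqI(2)[of P "mat2 (gd A) 0 0 (gd D)"] is_gdrazin_diag_block by (simp add: assms(9))
  have Q: "mgd Q = mat2 0 (B * gd (C * B)) (C * gd (B * C)) 0"
    using mgd_eqI(2)[of Q "mat2 0 (B * gd (C * B)) (C * gd (B * C)) 0"] is_gdrazin_antidiag_block
    by (simp add: assms(10))
  have Qd_P: "mpow (mgd Q) k ** P = 0" if "0 < k" for k
    unfolding m2_of_vec_inject[of _ 0]
    using power_Suc_mult_eq_0[OF gd_antidiag_mult_diag, of "k - 1"] that
    by (simp add: Q assms(9))
  have Q_Pd: "Q ** mpow (mgd P) k = 0" if "0 < k" for k
    unfolding m2_of_vec_inject[of _ 0]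
    using mult_power_Suc_eq_0[OF antidiag_mult_gd_diag, of "k - 1"] that
    by (simp add: P assms(10))
  have "(\<lambda>n. mpow (mgd Q) (n + 2) ** P ** mpow M n ** mpi P) = (\<lambda>n. 0)"
    "(\<lambda>n. \<Sum>k. mpow (mgd Q) (k + 1) ** P ** mpow M (n + k) ** Q ** mpow (mgd P) (n + 2)) = (\<lambda>n. 0)"
    "(\<lambda>n. mpow (mgd Q) (n + 2) ** P ** mpow M n ** Q ** mgd P) = (\<lambda>n. 0)"
    by (simp_all add: Qd_P del: mpow.simps)
  moreover have "(\<lambda>n. mpow M n ** Q ** mpow (mgd P) (n + 2)) = (\<lambda>n. 0)"
    by (simp add: Q_Pd flip: matrix_mul_assoc del: mpow.simps)
  ultimately show ?thesis
    using M by (simp add: gpi_BC_gd_A C_gd_BC_gpi_A swapped_block.gpi_BC_gd_A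
        swapped_block.C_gd_BC_gpi_A)
qed

end
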